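(* Let $m\in\mathbb{N}$ and let $X=\{a_1,\dots,a_n\}\subset\mathbb{R}^m$ be a finite point cloud with at least two points, equipped with the Euclidean metric $d_X$. Let $Y=\rho_{\mathrm{UTD}}(X)\subset\mathcal{S}(\mathbb{C}^{m+1})$, let $d_Y$ be the Hilbert--Schmidt metric restricted to $Y$, and let $\lambda=r(X)\sqrt{m(m+1)}$. Then the (Vietoris--Rips) persistent homology of $(X,d_X)$ equals the persistent homology of $(Y,\lambda\,d_Y)$, i.e., for every $k\ge0$ the degree-$k$ persistence vector spaces are isomorphic (equivalently, they have the same persistence diagrams).
   Context: Notation: $\bar a=\frac1n\sum_i a_i$, $\mathrm{diam}(X)=\max_{i,j}\lVert a_i-a_j\rVert$, $r(X)=\mathrm{diam}(X)/2$. $R_m$ is the $(m+1)\times(m+1)$ orthogonal matrix with, for $i,j\le m$, $(R_m)_{ii}=\frac{1+(m-1)\sqrt{m+1}}{m\sqrt{m+1}}$, $(R_m)_{ij}=\frac{1-\sqrt{m+1}}{m\sqrt{m+1}}$ ($i\neq j$), $(R_m)_{m+1,j}=-\frac{1}{\sqrt{m+1}}$ ($j\le m$), $(R_m)_{i,m+1}=\frac1{\sqrt{m+1}}$ (all $i$). The uniform transformation is $\mathcal{T}_X(x)=\frac{1}{r(X)\sqrt{m(m+1)}}R_m\begin{bmatrix}x-\bar a\\0\end{bmatrix}+\frac{1}{m+1}\mathbf{1}_{m+1}$, and $\rho_{\mathrm{UTD}}(x)=\sum_{j=1}^{m+1}\mathcal{T}_X(x)_j|j\rangle\langle j|$ (diagonal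 density matrix). Hilbert--Schmidt metric: $d_{\mathrm{HS}}(\rho,\sigma)=\sqrt{\mathrm{Tr}[(\rho-\sigma)^\dagger(\rho-\sigma)]}$. For a finite metric space $(Z,d_Z)$ and $\epsilon\ge0$, the Vietoris--Rips complex $\mathcal{R}^\epsilon(Z,d_Z)$ is the abstract simplicial complex whose simplices are nonempty subsets $\sigma\subseteq Z$ with $\mathrm{diam}(\sigma)<\epsilon$ (all singletons included); for $\epsilon\le\epsilon'$ there are inclusions $\mathcal{R}^\epsilon\hookrightarrow\mathcal{R}^{\epsilon'}$. The degree-$k$ persistent homology of $(Z,d_Z)$ is the persistence vector space $\epsilon\mapsto H_k(\mathcal{R}^\epsilon(Z,d_Z);\mathbb{F})$ (simplicial homology over a fixed field $\mathbb{F}$) together with the linear maps induced by these inclusions. *)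

theory Defs
  imports "HOL-Analysis.Analysis"
begin

text \<open>Points of R^m are elements of real^'m, m = CARD('m). Coordinates of C^(m+1)
  are indexed by 'm option: Some i are the first m coordinates, None is coordinate m+1.\<close>

definition mean_pt :: "(real^'m) set \<Rightarrow> real^'m" where
  "mean_pt X = (1 / real (card X)) *\<^sub>R (\<Sum>a\<in>X. a)"

definition diam_pc :: "(real^'m) set \<Rightarrow> real" where
  "diam_pc X = Max {dist a b | a b. a \<in> X \<and> b \<in> X}"

definition rad_pc :: "(real^'m) set \<Rightarrow> real" where
  "rad_pc X = diam_pc X / 2"

definition Rmat :: "'m::finite option \<Rightarrow> 'm option \<Rightarrow> real" where
  "Rmat i j = (let m = real CARD('m) in
     (case (i, j) of
        (Some a, Some b) \<Rightarrow> if a = b then (1 + (m - 1) * sqrt (m + 1)) / (m * sqrt (m + 1))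
                           else (1 - sqrt (m + 1)) / (m * sqrt (m + 1))
      | (None, Some b) \<Rightarrow> - 1 / sqrt (m + 1)
      | (_, None) \<Rightarrow> 1 / sqrt (m + 1)))"

definition pad0 :: "real^'m \<Rightarrow> 'm option \<Rightarrow> real" where
  "pad0 x i = (case i of Some a \<Rightarrow> x $ a | None \<Rightarrow> 0)"

definition unif_transf :: "(real^'m::finite) set \<Rightarrow> real^'m \<Rightarrow> real^('m option)" where
  "unif_transf X x = (\<chi> j. (1 / (rad_pc X * sqrt (real CARD('m) * (real CARD('m) + 1)))) *
        (\<Sum>i\<in>UNIV. Rmat j i * pad0 (x - mean_pt X) i) + 1 / (real CARD('m) + 1))"

definition rho_utd :: "(real^'m::finite) set \<Rightarrow> real^'m \<Rightarrow> complex^('m option)^('m option)" where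
  "rho_utd X x = (\<chi> i j. if i = j then complex_of_real (unif_transf X x $ j) else 0)"

definition mat_adj :: "complex^'n^'n \<Rightarrow> complex^'n^'n" where
  "mat_adj A = (\<chi> i j. cnj (A $ j $ i))"

text \<open>Hilbert--Schmidt metric (the trace is real and nonnegative; we take its real part).\<close>
definition hs_dist :: "complex^'n^'n \<Rightarrow> complex^'n^'n \<Rightarrow> real" where
  "hs_dist \<rho> \<sigma> = sqrt (Re (trace (mat_adj (\<rho> - \<sigma>) ** (\<rho> - \<sigma>))))"

definition rips :: "'a set \<Rightarrow> ('a \<Rightarrow> 'a \<Rightarrow> real) \<Rightarrow> real \<Rightarrow> 'a set set" where
  "rips Z d \<epsilon> = {\<sigma>. \<sigma> \<noteq> {} \<and> finite \<sigma> \<and> \<sigma> \<subseteq> Z \<and>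
       Max {d u v | u v. u \<in> \<sigma> \<and> v \<in> \<sigma>} < \<epsilon>}"

definition osimplices :: "'a set set \<Rightarrow> nat \<Rightarrow> 'a list set" where
  "osimplices K k = {vs. length vs = Suc k \<and> distinct vs \<and> set vs \<in> K}"

text \<open>Simplicial k-chains with coefficients in a field: alternating functions on
  ordered k-simplices (the usual oriented chain group C_k(K;F)).\<close>
definition chains :: "'a set set \<Rightarrow> nat \<Rightarrow> ('a list \<Rightarrow> 'f::field) set" where
  "chains K k = {c. (\<forall>vs. vs \<notin> osimplices K k \<longrightarrow> c vs = 0) \<and>
      (\<forall>vs\<in>osimplices K k. \<forall>p. p permutes {..<Suc k} \<longrightarrow>
          c (map (\<lambda>i. vs ! p i) [0..<Suc k]) = of_int (sign p) * c vs)}"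

text \<open>Boundary map: (bd c)(u_0..u_{k-1}) = sum over w of c(w,u_0,..,u_{k-1}),
  which is the alternating-function form of the usual boundary.\<close>
definition bd :: "'a set set \<Rightarrow> ('a list \<Rightarrow> 'f::field) \<Rightarrow> 'a list \<Rightarrow> 'f" where
  "bd K c us = (if us \<noteq> [] \<and> distinct us \<and> set us \<in> K
      then (\<Sum>w\<in>{w. w \<notin> set us \<and> insert w (set us) \<in> K}. c (w # us)) else 0)"

definition cycles :: "'a set set \<Rightarrow> nat \<Rightarrow> ('a list \<Rightarrow> 'f::field) set" where
  "cycles K k = {c \<in> chains K k. bd K c = (\<lambda>_. 0)}"

definition boundaries :: "'a set set \<Rightarrow> nat \<Rightarrow> ('a list \<Rightarrow> 'f::field) set" where
  "boundaries K k = bd K ` chains K (Suc k)"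

definition hclass :: "('a list \<Rightarrow> 'f::field) set \<Rightarrow> ('a list \<Rightarrow> 'f) \<Rightarrow> ('a list \<Rightarrow> 'f) set" where
  "hclass B z = {(\<lambda>v. z v + b v) | b. b \<in> B}"

text \<open>H_k(K;F) = Z_k / B_k, elements are cosets of B_k.\<close>
definition homology :: "'a set set \<Rightarrow> nat \<Rightarrow> ('a list \<Rightarrow> 'f::field) set set" where
  "homology K k = hclass (boundaries K k) ` cycles K k"

text \<open>Isomorphism of the degree-k persistence vector spaces of two filtrations
  (K1 eps)_eps and (K2 eps)_eps: a family of linear bijections between the homology
  spaces commuting with the maps induced by inclusions ([z] maps to [z]).\<close>
definition ph_iso :: "'f::field itself \<Rightarrow> (real \<Rightarrow> 'a set set) \<Rightarrow> (real \<Rightarrow> 'b set set) \<Rightarrow> nat \<Rightarrow> bool" where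
  "ph_iso _ K1 K2 k = (\<exists>\<phi> :: real \<Rightarrow> ('a list \<Rightarrow> 'f) set \<Rightarrow> ('b list \<Rightarrow> 'f) set.
     (\<forall>\<epsilon>. bij_betw (\<phi> \<epsilon>) (homology (K1 \<epsilon>) k) (homology (K2 \<epsilon>) k)) \<and>
     (\<forall>\<epsilon>. \<forall>z\<in>cycles (K1 \<epsilon>) k. \<forall>w\<in>cycles (K1 \<epsilon>) k. \<forall>a::'f.
        \<forall>z'\<in>\<phi> \<epsilon> (hclass (boundaries (K1 \<epsilon>) k) z). \<forall>w'\<in>\<phi> \<epsilon> (hclass (boundaries (K1 \<epsilon>) k) w).
          (\<lambda>v. z' v + w' v) \<in> \<phi> \<epsilon> (hclass (boundaries (K1 \<epsilon>) k) (\<lambda>v. z v + w v)) \<and>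
          (\<lambda>v. a * z' v) \<in> \<phi> \<epsilon> (hclass (boundaries (K1 \<epsilon>) k) (\<lambda>v. a * z v))) \<and>
     (\<forall>\<epsilon> \<epsilon>'. \<epsilon> \<le> \<epsilon>' \<longrightarrow> (\<forall>z\<in>cycles (K1 \<epsilon>) k. \<forall>z'\<in>\<phi> \<epsilon> (hclass (boundaries (K1 \<epsilon>) k) z).
          \<phi> \<epsilon>' (hclass (boundaries (K1 \<epsilon>') k) z) = hclass (boundaries (K2 \<epsilon>') k) z')))"

end

theory Submission
  imports Defs
begin

text \<open>
  The matrix \<open>R\<^sub>m\<close> maps every padded vector \<open>[v; 0]\<close> to a vector of the same
  Euclidean length, so the uniform transformation scales all distances by exactly \<open>1 / \<lambda>\<close>;
  and the Hilbert--Schmidt distance between two diagonal density matrices is the Euclidean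
  distance between their diagonals. Hence \<open>\<rho>\<^sub>U\<^sub>T\<^sub>D\<close> is an isometry from
  \<open>(X, d\<^sub>X)\<close> onto \<open>(Y, \<lambda> d\<^sub>Y)\<close>. An isometric bijection maps each Rips complex onto the
  corresponding Rips complex, and relabelling the vertices of chains along it identifies chains,
  cycles, boundaries and homology classes, compatibly with the maps induced by the inclusions
  of the filtration.
\<close>

section \<open>Relabelling chains along a bijection\<close>

definition relabel_chain :: "('b \<Rightarrow> 'a) \<Rightarrow> 'b set \<Rightarrow> ('a list \<Rightarrow> 'f::zero) \<Rightarrow> 'b list \<Rightarrow> 'f" where
  "relabel_chain g Y c = (\<lambda>vs. if set vs \<subseteq> Y then c (map g vs) else 0)"

definition supported_on :: "'a set \<Rightarrow> ('a list \<Rightarrow> 'f::zero) \<Rightarrow> bool" where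
  "supported_on X c \<longleftrightarrow> (\<forall>vs. c vs \<noteq> 0 \<longrightarrow> set vs \<subseteq> X)"

lemma set_map_permuted_nth:
  assumes "p permutes {..<Suc k}" "length vs = Suc k"
  shows "set (map (\<lambda>i. vs ! p i) [0..<Suc k]) = set vs"
proof -
  have "set (map (\<lambda>i. vs ! p i) [0..<Suc k]) = (\<lambda>i. vs ! i) ` p ` {..<Suc k}"
    by (simp only: set_map set_upt atLeast0LessThan image_image)
  also have "\<dots> = set vs"
    using assms by (auto simp: permutes_image in_set_conv_nth)
  finally show ?thesis .
qed

lemma chains_vanish: "c \<in> chains K k \<Longrightarrow> vs \<notin> osimplices K k \<Longrightarrow> c vs = 0"
  unfolding chains_def by simp

lemma chains_alternating:
  "c \<in> chains K k \<Longrightarrow> vs \<in> osimplices K k \<Longrightarrow> p permutes {..<Suc k} \<Longrightarrow>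
   c (map (\<lambda>i. vs ! p i) [0..<Suc k]) = of_int (sign p) * c vs"
  unfolding chains_def by simp

lemma chains_supported_on:
  assumes "K \<subseteq> Pow X" "c \<in> chains K k"
  shows "supported_on X c"
  using assms chains_vanish[OF assms(2)] unfolding supported_on_def osimplices_def by blast

lemma bd_supported_on: "K \<subseteq> Pow X \<Longrightarrow> supported_on X (bd K c)"
  unfolding bd_def supported_on_def by auto

lemma supported_on_add:
  fixes a b :: "'a list \<Rightarrow> 'f::comm_monoid_add"
  shows "supported_on X a \<Longrightarrow> supported_on X b \<Longrightarrow> supported_on X (\<lambda>v. a v + b v)"
  unfolding supported_on_def by (metis add.right_neutral)

lemma chains_add: "c \<in> chains K k \<Longrightarrow> c' \<in> chains K k \<Longrightarrow> (\<lambda>v. c v + c' v) \<in> chains K k"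
  unfolding chains_def by (simp add: distrib_left)

lemma chains_scale: "c \<in> chains K k \<Longrightarrow> (\<lambda>v. a * c v) \<in> chains K k"
  unfolding chains_def by (simp add: mult.left_commute)

lemma bd_add: "bd K (\<lambda>v. c v + c' v) = (\<lambda>v. bd K c v + bd K c' v)"
  unfolding bd_def by (auto simp: sum.distrib)

lemma bd_scale: "bd K (\<lambda>v. a * c v) = (\<lambda>v. a * bd K c v)"
  unfolding bd_def by (auto simp: sum_distrib_left)

lemma boundaries_add:
  assumes "b \<in> boundaries K k" "b' \<in> boundaries K k"
  shows "(\<lambda>v. b v + b' v) \<in> boundaries K k"
proof -
  obtain c c' where c: "c \<in> chains K (Suc k)" "c' \<in> chains K (Suc k)" "b = bd K c" "b' = bd K c'"
    using assms unfolding boundaries_def by blast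
  then have "(\<lambda>v. b v + b' v) = bd K (\<lambda>v. c v + c' v)"
    by (simp add: bd_add)
  then show ?thesis
    unfolding boundaries_def using chains_add[OF c(1,2)] by (rule image_eqI)
qed

lemma boundaries_scale:
  assumes "b \<in> boundaries K k"
  shows "(\<lambda>v. a * b v) \<in> boundaries K k"
proof -
  obtain c where c: "c \<in> chains K (Suc k)" "b = bd K c"
    using assms unfolding boundaries_def by blast
  then have "(\<lambda>v. a * b v) = bd K (\<lambda>v. a * c v)"
    by (simp add: bd_scale)
  then show ?thesis
    unfolding boundaries_def using chains_scale[OF c(1)] by (rule image_eqI)
qed

lemma hclass_eq_image: "hclass B z = (\<lambda>b v. z v + b v) ` B"
  by (auto simp: hclass_def)

lemma hclass_add_boundary:
  fixes z :: "'a list \<Rightarrow> 'f::field"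
  assumes b: "b \<in> boundaries K k"
  shows "hclass (boundaries K k) (\<lambda>v. z v + b v) = hclass (boundaries K k) z"
proof (intro equalityI subsetI)
  fix x assume "x \<in> hclass (boundaries K k) (\<lambda>v. z v + b v)"
  then obtain b' where b': "b' \<in> boundaries K k" "x = (\<lambda>v. z v + b v + b' v)"
    unfolding hclass_eq_image by blast
  then have "x = (\<lambda>v. z v + (b v + b' v))"
    by (simp add: add.assoc)
  then show "x \<in> hclass (boundaries K k) z"
    unfolding hclass_eq_image using boundaries_add[OF b b'(1)] by (rule image_eqI)
next
  fix x assume "x \<in> hclass (boundaries K k) z"
  then obtain b' where b': "b' \<in> boundaries K k" "x = (\<lambda>v. z v + b' v)"
    unfolding hclass_eq_image by blast
  then have "x = (\<lambda>v. (z v + b v) + (b' v + (-1) * b v))"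
    by (simp add: algebra_simps)
  then show "x \<in> hclass (boundaries K k) (\<lambda>v. z v + b v)"
    unfolding hclass_eq_image using boundaries_add[OF b'(1) boundaries_scale[OF b]] by (rule image_eqI)
qed

lemma relabel_chain_add:
  fixes a b :: "'a list \<Rightarrow> 'f::comm_monoid_add"
  shows "relabel_chain g Y (\<lambda>v. a v + b v) = (\<lambda>v. relabel_chain g Y a v + relabel_chain g Y b v)"
  by (simp add: relabel_chain_def fun_eq_iff)

lemma relabel_chain_hclass:
  fixes z :: "'a list \<Rightarrow> 'f::field"
  shows "relabel_chain g Y ` hclass B z = hclass (relabel_chain g Y ` B) (relabel_chain g Y z)"
  by (simp add: hclass_eq_image image_image relabel_chain_add)

lemma image_relabel_hclass_add:
  fixes z w :: "'a list \<Rightarrow> 'f::field"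
  assumes "z' \<in> relabel_chain g Y ` hclass (boundaries K k) z"
    and "w' \<in> relabel_chain g Y ` hclass (boundaries K k) w"
  shows "(\<lambda>v. z' v + w' v) \<in> relabel_chain g Y ` hclass (boundaries K k) (\<lambda>v. z v + w v)"
proof -
  obtain b1 b2 where b: "b1 \<in> boundaries K k" "b2 \<in> boundaries K k"
    and z': "z' = relabel_chain g Y (\<lambda>v. z v + b1 v)" and w': "w' = relabel_chain g Y (\<lambda>v. w v + b2 v)"
    using assms unfolding hclass_eq_image by auto
  have "(\<lambda>v. z' v + w' v) = relabel_chain g Y (\<lambda>v. (z v + w v) + (b1 v + b2 v))"
    unfolding z' w' relabel_chain_add by (simp add: algebra_simps)
  moreover have "(\<lambda>v. (z v + w v) + (b1 v + b2 v)) \<in> hclass (boundaries K k) (\<lambda>v. z v + w v)"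
    unfolding hclass_eq_image using boundaries_add[OF b] by (rule imageI)
  ultimately show ?thesis
    by (rule image_eqI)
qed

lemma image_relabel_hclass_scale:
  fixes z :: "'a list \<Rightarrow> 'f::field"
  assumes "z' \<in> relabel_chain g Y ` hclass (boundaries K k) z"
  shows "(\<lambda>v. a * z' v) \<in> relabel_chain g Y ` hclass (boundaries K k) (\<lambda>v. a * z v)"
proof -
  obtain b where b: "b \<in> boundaries K k" and z': "z' = relabel_chain g Y (\<lambda>v. z v + b v)"
    using assms unfolding hclass_eq_image by auto
  have "(\<lambda>v. a * z' v) = relabel_chain g Y (\<lambda>v. a * z v + a * b v)"
    unfolding z' by (simp add: relabel_chain_def fun_eq_iff algebra_simps)
  moreover have "(\<lambda>v. a * z v + a * b v) \<in> hclass (boundaries K k) (\<lambda>v. a * z v)"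
    unfolding hclass_eq_image using boundaries_scale[OF b] by (rule imageI)
  ultimately show ?thesis
    by (rule image_eqI)
qed

locale inverse_bijections =
  fixes X :: "'a set" and Y :: "'b set" and f :: "'a \<Rightarrow> 'b" and g :: "'b \<Rightarrow> 'a"
  assumes f_into: "\<And>x. x \<in> X \<Longrightarrow> f x \<in> Y" and g_f: "\<And>x. x \<in> X \<Longrightarrow> g (f x) = x"
    and g_into: "\<And>y. y \<in> Y \<Longrightarrow> g y \<in> X" and f_g: "\<And>y. y \<in> Y \<Longrightarrow> f (g y) = y"

lemma inverse_bijections_swap: "inverse_bijections X Y f g \<Longrightarrow> inverse_bijections Y X g f"
  by (simp add: inverse_bijections_def)

context inverse_bijections
begin

lemma inj_on_g: "inj_on g Y"
  by (metis f_g inj_onI)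

lemma image_complex_iff:
  assumes "K \<subseteq> Pow X" "A \<subseteq> Y"
  shows "A \<in> (`) f ` K \<longleftrightarrow> g ` A \<in> K"
proof
  assume "A \<in> (`) f ` K"
  then obtain s where "s \<in> K" "A = f ` s" by blast
  moreover have "g ` f ` s = s"
    using g_f \<open>s \<in> K\<close> assms(1) by (force simp: image_image)
  ultimately show "g ` A \<in> K" by simp
next
  assume "g ` A \<in> K"
  moreover have "f ` g ` A = A"
    using f_g assms(2) by (force simp: image_image)
  ultimately show "A \<in> (`) f ` K" by (metis image_eqI)
qed

lemma image_complex_subset_Pow: "K \<subseteq> Pow X \<Longrightarrow> (`) f ` K \<subseteq> Pow Y"
  using f_into by auto

lemma image_image_complex:
  assumes "K \<subseteq> Pow X"
  shows "(`) g ` (`) f ` K = K"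
proof -
  have "g ` f ` s = s" if "s \<in> K" for s
    using that assms g_f by (force simp: image_image)
  then show ?thesis by (simp add: image_image)
qed

lemma osimplices_image_complex_iff:
  "K \<subseteq> Pow X \<Longrightarrow> set vs \<subseteq> Y \<Longrightarrow> vs \<in> osimplices ((`) f ` K) k \<longleftrightarrow> map g vs \<in> osimplices K k"
  unfolding osimplices_def using image_complex_iff[of K "set vs"] inj_on_subset[OF inj_on_g]
  by (auto simp: distinct_map)

lemma relabel_chain_chains:
  assumes K: "K \<subseteq> Pow X" and c: "c \<in> chains K k"
  shows "relabel_chain g Y c \<in> chains ((`) f ` K) k"
  unfolding chains_def
proof (intro CollectI conjI allI impI ballI)
  fix vs assume "vs \<notin> osimplices ((`) f ` K) k"
  then show "relabel_chain g Y c vs = 0"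
    using chains_vanish[OF c] osimplices_image_complex_iff[OF K] unfolding relabel_chain_def by auto
next
  fix vs p assume vs: "vs \<in> osimplices ((`) f ` K) k" and p: "p permutes {..<Suc k}"
  have Y: "set vs \<subseteq> Y" and len: "length vs = Suc k"
    using vs image_complex_subset_Pow[OF K] unfolding osimplices_def by auto
  have Y': "set (map (\<lambda>i. vs ! p i) [0..<Suc k]) \<subseteq> Y"
    using Y set_map_permuted_nth[OF p len] by simp
  have "map g (map (\<lambda>i. vs ! p i) [0..<Suc k]) = map (\<lambda>i. map g vs ! p i) [0..<Suc k]"
    using permutes_in_image[OF p] len by auto
  moreover have "c (map (\<lambda>i. map g vs ! p i) [0..<Suc k]) = of_int (sign p) * c (map g vs)"
    using chains_alternating[OF c _ p] osimplices_image_complex_iff[OF K Y] vs by simp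
  ultimately show "relabel_chain g Y c (map (\<lambda>i. vs ! p i) [0..<Suc k]) = of_int (sign p) * relabel_chain g Y c vs"
    unfolding relabel_chain_def by (simp only: Y Y' if_True)
qed

lemma image_coface_vertices:
  assumes K: "K \<subseteq> Pow X" and A: "A \<subseteq> Y"
  shows "g ` {w. w \<notin> A \<and> insert w A \<in> (`) f ` K} = {x. x \<notin> g ` A \<and> insert x (g ` A) \<in> K}"
proof -
  have "w \<notin> A \<and> insert w A \<in> (`) f ` K \<longleftrightarrow> w \<in> Y \<and> g w \<notin> g ` A \<and> insert (g w) (g ` A) \<in> K" for w
  proof (cases "w \<in> Y")
    case True
    then show ?thesis
      using image_complex_iff[OF K, of "insert w A"] A inj_on_image_mem_iff[OF inj_on_g True A] by auto
  next
    case False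
    then show ?thesis using image_complex_subset_Pow[OF K] by auto
  qed
  then have "{w. w \<notin> A \<and> insert w A \<in> (`) f ` K} = {w \<in> Y. g w \<notin> g ` A \<and> insert (g w) (g ` A) \<in> K}"
    by blast
  also have "g ` \<dots> = {x \<in> g ` Y. x \<notin> g ` A \<and> insert x (g ` A) \<in> K}"
    by auto
  also have "g ` Y = X"
    using g_into f_into g_f by force
  also have "{x \<in> X. x \<notin> g ` A \<and> insert x (g ` A) \<in> K} = {x. x \<notin> g ` A \<and> insert x (g ` A) \<in> K}"
    using K by blast
  finally show ?thesis .
qed

lemma relabel_chain_bd:
  assumes K: "K \<subseteq> Pow X"
  shows "relabel_chain g Y (bd K c) = bd ((`) f ` K) (relabel_chain g Y c)"
proof
  fix us
  show "relabel_chain g Y (bd K c) us = bd ((`) f ` K) (relabel_chain g Y c) us"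
  proof (cases "set us \<subseteq> Y")
    case False
    then show ?thesis
      unfolding relabel_chain_def bd_def using image_complex_subset_Pow[OF K] by auto
  next
    case Y: True
    define S where "S = {w. w \<notin> set us \<and> insert w (set us) \<in> (`) f ` K}"
    have SY: "S \<subseteq> Y"
      using image_complex_subset_Pow[OF K] unfolding S_def by auto
    have "(us \<noteq> [] \<and> distinct us \<and> set us \<in> (`) f ` K) \<longleftrightarrow>
          (map g us \<noteq> [] \<and> distinct (map g us) \<and> set (map g us) \<in> K)"
      using image_complex_iff[OF K Y] inj_on_subset[OF inj_on_g Y] by (auto simp: distinct_map)
    moreover have "(\<Sum>x\<in>g ` S. c (x # map g us)) = (\<Sum>w\<in>S. c (g w # map g us))"
      by (simp add: sum.reindex[OF inj_on_subset[OF inj_on_g SY]])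
    moreover have "\<dots> = (\<Sum>w\<in>S. relabel_chain g Y c (w # us))"
      using SY Y by (intro sum.cong) (auto simp: relabel_chain_def)
    ultimately show ?thesis
      unfolding relabel_chain_def bd_def using Y image_coface_vertices[OF K Y] by (simp add: S_def)
  qed
qed

lemma relabel_chain_inverse:
  assumes "supported_on X c"
  shows "relabel_chain f X (relabel_chain g Y c) = c"
proof
  fix vs
  show "relabel_chain f X (relabel_chain g Y c) vs = c vs"
  proof (cases "set vs \<subseteq> X")
    case True
    then have "map g (map f vs) = vs" and "set (map f vs) \<subseteq> Y"
      using g_f f_into by (induct vs) auto
    then show ?thesis using True unfolding relabel_chain_def by simp
  next
    case False
    then show ?thesis using assms unfolding relabel_chain_def supported_on_def by auto
  qed
qed

lemma relabel_chain_cycles: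
  assumes K: "K \<subseteq> Pow X" and c: "c \<in> cycles K k"
  shows "relabel_chain g Y c \<in> cycles ((`) f ` K) k"
proof -
  have "bd ((`) f ` K) (relabel_chain g Y c) = relabel_chain g Y (bd K c)"
    by (rule relabel_chain_bd[OF K, symmetric])
  also have "\<dots> = relabel_chain g Y (\<lambda>_. 0)"
    using c unfolding cycles_def by simp
  also have "\<dots> = (\<lambda>_. 0)"
    by (simp add: relabel_chain_def)
  finally have "bd ((`) f ` K) (relabel_chain g Y c) = (\<lambda>_. 0)" .
  moreover have "relabel_chain g Y c \<in> chains ((`) f ` K) k"
    using c unfolding cycles_def by (blast intro: relabel_chain_chains[OF K])
  ultimately show ?thesis
    unfolding cycles_def by simp
qed

lemma chains_image_complex:
  assumes K: "K \<subseteq> Pow X"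
  shows "chains ((`) f ` K) k = relabel_chain g Y ` (chains K k :: ('a list \<Rightarrow> 'f::field) set)"
proof
  show "relabel_chain g Y ` chains K k \<subseteq> chains ((`) f ` K) k"
    using relabel_chain_chains[OF K] by blast
next
  interpret inv: inverse_bijections Y X g f
    by (rule inverse_bijections_swap) unfold_locales
  show "chains ((`) f ` K) k \<subseteq> relabel_chain g Y ` (chains K k :: ('a list \<Rightarrow> 'f) set)"
  proof
    fix d :: "'b list \<Rightarrow> 'f" assume d: "d \<in> chains ((`) f ` K) k"
    have "relabel_chain f X d \<in> chains K k"
      using inv.relabel_chain_chains[OF image_complex_subset_Pow[OF K] d] image_image_complex[OF K] by simp
    moreover have "relabel_chain g Y (relabel_chain f X d) = d"
      using inv.relabel_chain_inverse chains_supported_on[OF image_complex_subset_Pow[OF K] d] by blast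
    ultimately show "d \<in> relabel_chain g Y ` chains K k" by (metis image_eqI)
  qed
qed

lemma cycles_image_complex:
  assumes K: "K \<subseteq> Pow X"
  shows "cycles ((`) f ` K) k = relabel_chain g Y ` (cycles K k :: ('a list \<Rightarrow> 'f::field) set)"
proof
  show "relabel_chain g Y ` cycles K k \<subseteq> cycles ((`) f ` K) k"
    using relabel_chain_cycles[OF K] by blast
next
  interpret inv: inverse_bijections Y X g f
    by (rule inverse_bijections_swap) unfold_locales
  show "cycles ((`) f ` K) k \<subseteq> relabel_chain g Y ` (cycles K k :: ('a list \<Rightarrow> 'f) set)"
  proof
    fix d :: "'b list \<Rightarrow> 'f" assume d: "d \<in> cycles ((`) f ` K) k"
    have "relabel_chain f X d \<in> cycles K k"
      using inv.relabel_chain_cycles[OF image_complex_subset_Pow[OF K] d] image_image_complex[OF K] by simp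
    moreover have "relabel_chain g Y (relabel_chain f X d) = d"
      using d inv.relabel_chain_inverse chains_supported_on[OF image_complex_subset_Pow[OF K]]
      unfolding cycles_def by blast
    ultimately show "d \<in> relabel_chain g Y ` cycles K k" by (metis image_eqI)
  qed
qed

lemma boundaries_image_complex:
  "K \<subseteq> Pow X \<Longrightarrow>
   boundaries ((`) f ` K) k = relabel_chain g Y ` (boundaries K k :: ('a list \<Rightarrow> 'f::field) set)"
  by (simp add: boundaries_def chains_image_complex image_image relabel_chain_bd)

lemma homology_image_complex:
  "K \<subseteq> Pow X \<Longrightarrow>
   homology ((`) f ` K) k = (`) (relabel_chain g Y) ` (homology K k :: ('a list \<Rightarrow> 'f::field) set set)"
  by (simp add: homology_def cycles_image_complex boundaries_image_complex image_image relabel_chain_hclass)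

lemma inj_on_image_relabel_chain_homology:
  assumes K: "K \<subseteq> Pow X"
  shows "inj_on ((`) (relabel_chain g Y)) (homology K k :: ('a list \<Rightarrow> 'f::field) set set)"
proof (rule inj_on_image)
  have "supported_on X x" if x: "x \<in> \<Union> (homology K k :: ('a list \<Rightarrow> 'f) set set)" for x
  proof -
    obtain z b where "z \<in> cycles K k" "b \<in> boundaries K k" "x = (\<lambda>v. z v + b v)"
      using x unfolding homology_def hclass_eq_image by blast
    then show ?thesis
      using chains_supported_on[OF K] bd_supported_on[OF K] supported_on_add
      unfolding cycles_def boundaries_def by blast
  qed
  moreover have "inj_on (relabel_chain g Y) {c :: 'a list \<Rightarrow> 'f. supported_on X c}"
    by (rule inj_on_inverseI[of _ "relabel_chain f X"]) (simp add: relabel_chain_inverse)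
  ultimately show "inj_on (relabel_chain g Y) (\<Union> (homology K k :: ('a list \<Rightarrow> 'f) set set))"
    by (meson inj_on_subset mem_Collect_eq subsetI)
qed

lemma ph_iso_image_complex:
  assumes K: "\<And>e. K e \<subseteq> Pow X"
    and mono: "\<And>e e'. e \<le> e' \<Longrightarrow> (boundaries (K e) k :: ('a list \<Rightarrow> 'f::field) set) \<subseteq> boundaries (K e') k"
  shows "ph_iso TYPE('f) K (\<lambda>e. (`) f ` K e) k"
  unfolding ph_iso_def
proof (intro exI[of _ "\<lambda>e S. relabel_chain g Y ` S"] conjI allI ballI impI)
  fix e
  show "bij_betw ((`) (relabel_chain g Y)) (homology (K e) k :: ('a list \<Rightarrow> 'f) set set) (homology ((`) f ` K e) k)"
    unfolding bij_betw_def homology_image_complex[OF K] using inj_on_image_relabel_chain_homology[OF K] by simp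
next
  fix e and z w :: "'a list \<Rightarrow> 'f" and a :: 'f and z' w'
  assume z': "z' \<in> relabel_chain g Y ` hclass (boundaries (K e) k) z"
    and w': "w' \<in> relabel_chain g Y ` hclass (boundaries (K e) k) w"
  show "(\<lambda>v. z' v + w' v) \<in> relabel_chain g Y ` hclass (boundaries (K e) k) (\<lambda>v. z v + w v)"
    using z' w' by (rule image_relabel_hclass_add)
  show "(\<lambda>v. a * z' v) \<in> relabel_chain g Y ` hclass (boundaries (K e) k) (\<lambda>v. a * z v)"
    using z' by (rule image_relabel_hclass_scale)
next
  fix e e' :: real and z :: "'a list \<Rightarrow> 'f" and z'
  assume "e \<le> e'" and "z' \<in> relabel_chain g Y ` hclass (boundaries (K e) k) z"
  then obtain b where b: "b \<in> boundaries (K e') k" and z': "z' = relabel_chain g Y (\<lambda>v. z v + b v)"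
    using mono unfolding hclass_eq_image by blast
  have "relabel_chain g Y ` hclass (boundaries (K e') k) z
        = hclass (boundaries ((`) f ` K e') k) (relabel_chain g Y z)"
    by (simp add: relabel_chain_hclass boundaries_image_complex[OF K])
  also have "\<dots> = hclass (boundaries ((`) f ` K e') k) z'"
    unfolding z' relabel_chain_add
    by (rule hclass_add_boundary[symmetric]) (use b boundaries_image_complex[OF K] in blast)
  finally show "relabel_chain g Y ` hclass (boundaries (K e') k) z = hclass (boundaries ((`) f ` K e') k) z'" .
qed

end

section \<open>Vietoris--Rips filtrations\<close>

lemma rips_subset_Pow: "rips Z d e \<subseteq> Pow Z"
  unfolding rips_def by auto

lemma pairwise_values_eq_image: "{d u v | u v. u \<in> s \<and> v \<in> s} = case_prod d ` (s \<times> s)"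
  by auto

lemma rips_mono: "e \<le> e' \<Longrightarrow> rips Z d e \<subseteq> rips Z d e'"
  unfolding rips_def by auto

lemma rips_downward_closed:
  assumes s: "s \<in> rips Z d e" and t: "t \<noteq> {}" "t \<subseteq> s"
  shows "t \<in> rips Z d e"
proof -
  have "finite s" "s \<subseteq> Z" "Max {d u v | u v. u \<in> s \<and> v \<in> s} < e"
    using s unfolding rips_def by auto
  moreover have "finite {d u v | u v. u \<in> s \<and> v \<in> s}"
    using \<open>finite s\<close> unfolding pairwise_values_eq_image by simp
  moreover have "{d u v | u v. u \<in> t \<and> v \<in> t} \<subseteq> {d u v | u v. u \<in> s \<and> v \<in> s}"
    and "{d u v | u v. u \<in> t \<and> v \<in> t} \<noteq> {}"
    using t by blast+
  ultimately have "Max {d u v | u v. u \<in> t \<and> v \<in> t} < e"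
    using Max_mono by (metis (no_types, lifting) le_less_trans)
  then show ?thesis
    using t \<open>finite s\<close> \<open>s \<subseteq> Z\<close> unfolding rips_def by (auto intro: finite_subset)
qed

lemma rips_image_isometric:
  assumes inj: "inj_on f Z" and iso: "\<And>u v. u \<in> Z \<Longrightarrow> v \<in> Z \<Longrightarrow> d2 (f u) (f v) = d1 u v"
  shows "rips (f ` Z) d2 e = (`) f ` rips Z d1 e"
proof -
  have image_in_rips_iff: "f ` s \<in> rips (f ` Z) d2 e \<longleftrightarrow> s \<in> rips Z d1 e" if s: "s \<subseteq> Z" for s
  proof -
    have "case_prod d2 ` (f ` s \<times> f ` s) = case_prod d1 ` (s \<times> s)"
      unfolding image_paired_Times[symmetric] image_image using s iso by (intro image_cong) auto
    moreover have "finite (f ` s) \<longleftrightarrow> finite s"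
      using finite_image_iff[OF inj_on_subset[OF inj s]] .
    ultimately show ?thesis
      using s unfolding rips_def pairwise_values_eq_image by auto
  qed
  show ?thesis
  proof (intro equalityI subsetI)
    fix t assume t: "t \<in> rips (f ` Z) d2 e"
    then have "t \<subseteq> f ` Z"
      using rips_subset_Pow by blast
    then obtain s where "s \<subseteq> Z" "t = f ` s"
      unfolding subset_image_iff by blast
    then show "t \<in> (`) f ` rips Z d1 e"
      using image_in_rips_iff t by blast
  next
    fix t assume "t \<in> (`) f ` rips Z d1 e"
    then obtain s where "s \<in> rips Z d1 e" "t = f ` s"
      by blast
    then show "t \<in> rips (f ` Z) d2 e"
      using image_in_rips_iff rips_subset_Pow by blast
  qed
qed

lemma chains_mono:
  assumes KK': "K \<subseteq> K'" and c: "c \<in> chains K k"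
  shows "c \<in> chains K' k"
  unfolding chains_def
proof (intro CollectI conjI allI impI ballI)
  fix vs assume "vs \<notin> osimplices K' k"
  then show "c vs = 0"
    using KK' chains_vanish[OF c] unfolding osimplices_def by auto
next
  fix vs p assume vs: "vs \<in> osimplices K' k" and p: "p permutes {..<Suc k}"
  show "c (map (\<lambda>i. vs ! p i) [0..<Suc k]) = of_int (sign p) * c vs"
  proof (cases "vs \<in> osimplices K k")
    case True
    show ?thesis using chains_alternating[OF c True p] .
  next
    case False
    then have "set vs \<notin> K"
      using vs unfolding osimplices_def by auto
    moreover have "set (map (\<lambda>i. vs ! p i) [0..<Suc k]) = set vs"
      using vs unfolding osimplices_def by (intro set_map_permuted_nth[OF p]) simp
    ultimately have "map (\<lambda>i. vs ! p i) [0..<Suc k] \<notin> osimplices K k"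
      unfolding osimplices_def by (metis (mono_tags, lifting) mem_Collect_eq)
    then show ?thesis using chains_vanish[OF c] False by simp
  qed
qed

lemma bd_eq_bd_supercomplex:
  assumes "finite Z" "K \<subseteq> K'" "K' \<subseteq> Pow Z"
    and down: "\<And>s t. s \<in> K \<Longrightarrow> t \<noteq> {} \<Longrightarrow> t \<subseteq> s \<Longrightarrow> t \<in> K"
    and c: "c \<in> chains K (Suc k)"
  shows "bd K c = bd K' c"
proof
  fix us
  have vanish: "c (w # us) = 0" if "insert w (set us) \<notin> K" for w
    using chains_vanish[OF c] that unfolding osimplices_def by auto
  show "bd K c us = bd K' c us"
  proof (cases "us \<noteq> [] \<and> distinct us \<and> set us \<in> K'")
    case True
    let ?S = "{w. w \<notin> set us \<and> insert w (set us) \<in> K}"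
    let ?S' = "{w. w \<notin> set us \<and> insert w (set us) \<in> K'}"
    have "finite ?S'"
      using assms(1,3) by (auto intro: finite_subset)
    then have "(\<Sum>w\<in>?S. c (w # us)) = (\<Sum>w\<in>?S'. c (w # us))"
      using assms(2) vanish by (intro sum.mono_neutral_left) auto
    moreover have "(\<Sum>w\<in>?S'. c (w # us)) = 0" if "set us \<notin> K"
      using that True down vanish by (intro sum.neutral) (metis set_empty subset_insertI)
    ultimately show ?thesis
      using True unfolding bd_def by auto
  next
    case False
    then show ?thesis
      using assms(2) unfolding bd_def by auto
  qed
qed

lemma boundaries_mono:
  assumes "finite Z" "K \<subseteq> K'" "K' \<subseteq> Pow Z"
    and "\<And>s t. s \<in> K \<Longrightarrow> t \<noteq> {} \<Longrightarrow> t \<subseteq> s \<Longrightarrow> t \<in> K"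
  shows "(boundaries K k :: ('a list \<Rightarrow> 'f::field) set) \<subseteq> boundaries K' k"
proof
  fix b :: "'a list \<Rightarrow> 'f" assume "b \<in> boundaries K k"
  then obtain c where c: "c \<in> chains K (Suc k)" "b = bd K c"
    unfolding boundaries_def by blast
  have "bd K c = bd K' c"
    using assms c(1) by (rule bd_eq_bd_supercomplex)
  then show "b \<in> boundaries K' k"
    unfolding boundaries_def using c chains_mono[OF assms(2)] by auto
qed

theorem ph_iso_rips_isometric_image:
  assumes Z: "finite Z" and inj: "inj_on f Z"
    and iso: "\<And>u v. u \<in> Z \<Longrightarrow> v \<in> Z \<Longrightarrow> d2 (f u) (f v) = d1 u v"
  shows "ph_iso TYPE('f::field) (rips Z d1) (rips (f ` Z) d2) k"
proof -
  interpret inverse_bijections Z "f ` Z" f "the_inv_into Z f"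
    by unfold_locales
      (auto simp: the_inv_into_f_f[OF inj] f_the_inv_into_f[OF inj] the_inv_into_into[OF inj])
  have "(boundaries (rips Z d1 e) k :: ('a list \<Rightarrow> 'f) set) \<subseteq> boundaries (rips Z d1 e') k"
    if "e \<le> e'" for e e'
    using boundaries_mono[OF Z rips_mono[OF that] rips_subset_Pow] rips_downward_closed by blast
  then have "ph_iso TYPE('f) (rips Z d1) (\<lambda>e. (`) f ` rips Z d1 e) k"
    using ph_iso_image_complex rips_subset_Pow by blast
  moreover have "rips (f ` Z) d2 = (\<lambda>e. (`) f ` rips Z d1 e)"
  proof
    fix e
    show "rips (f ` Z) d2 e = (`) f ` rips Z d1 e"
      using inj iso by (rule rips_image_isometric)
  qed
  ultimately show ?thesis by simp
qed

section \<open>The uniform transformation is a scaled isometry\<close>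

lemma sum_UNIV_option: "(\<Sum>i\<in>(UNIV :: 'a::finite option set). h i) = h None + (\<Sum>a\<in>UNIV. h (Some a))"
  by (simp add: UNIV_option_conv sum.reindex)

lemma Rmat_pad0_Some:
  fixes v :: "real^'m::finite"
  defines "\<beta> \<equiv> (1 - sqrt (real CARD('m) + 1)) / (real CARD('m) * sqrt (real CARD('m) + 1))"
  shows "(\<Sum>i\<in>UNIV. Rmat (Some a) i * pad0 v i) = v $ a + \<beta> * (\<Sum>b\<in>UNIV. v $ b)"
proof -
  define m where "m = real CARD('m)"
  have "m > 0" unfolding m_def by simp
  then have "(1 + (m - 1) * sqrt (m + 1)) / (m * sqrt (m + 1)) = \<beta> + 1"
    unfolding \<beta>_def m_def[symmetric] by (simp add: field_simps)
  then have "Rmat (Some a) (Some b) = \<beta> + (if a = b then 1 else 0)" for b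
    unfolding Rmat_def Let_def \<beta>_def m_def by simp
  then have "Rmat (Some a) (Some b) * v $ b = \<beta> * v $ b + (if a = b then v $ b else 0)" for b
    by (simp add: distrib_right)
  then have "(\<Sum>i\<in>UNIV. Rmat (Some a) i * pad0 v i) = (\<Sum>b\<in>UNIV. \<beta> * v $ b + (if a = b then v $ b else 0))"
    by (simp add: sum_UNIV_option pad0_def)
  also have "\<dots> = v $ a + \<beta> * (\<Sum>b\<in>UNIV. v $ b)"
    by (simp add: sum.distrib sum_distrib_left)
  finally show ?thesis .
qed

lemma Rmat_pad0_None:
  fixes v :: "real^'m::finite"
  shows "(\<Sum>i\<in>UNIV. Rmat None i * pad0 v i) = - (\<Sum>b\<in>UNIV. v $ b) / sqrt (real CARD('m) + 1)"
  by (simp add: sum_UNIV_option pad0_def Rmat_def sum_divide_distrib[symmetric] sum_negf)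

lemma Rmat_beta_identity:
  fixes m s :: real
  assumes "m > 0" "s > 0" "s\<^sup>2 = m + 1"
  shows "2 * ((1 - s) / (m * s)) + m * ((1 - s) / (m * s))\<^sup>2 + 1 / s\<^sup>2 = 0"
proof -
  have "(2 * ((1 - s) / (m * s)) + m * ((1 - s) / (m * s))\<^sup>2 + 1 / s\<^sup>2) * (m * s\<^sup>2)
        = 1 - s\<^sup>2 + m"
    using assms(1,2) by (simp add: field_simps power2_eq_square)
  then show ?thesis
    using assms by simp
qed

lemma norm_vec_power2: "(norm (v :: real^'n::finite))\<^sup>2 = (\<Sum>i\<in>UNIV. (v $ i)\<^sup>2)"
  by (simp add: norm_vec_def L2_set_def sum_nonneg)

lemma norm_Rmat_pad0:
  fixes v :: "real^'m::finite"
  shows "norm (\<chi> j. \<Sum>i\<in>UNIV. Rmat j i * pad0 v i) = norm v"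
proof -
  define m where "m = real CARD('m)"
  define s where "s = sqrt (m + 1)"
  define \<beta> where "\<beta> = (1 - s) / (m * s)"
  define S where "S = (\<Sum>b\<in>UNIV. v $ b)"
  have m: "m > 0" and s: "s > 0" "s\<^sup>2 = m + 1"
    unfolding s_def m_def by simp_all
  have "(norm (\<chi> j. \<Sum>i\<in>UNIV. Rmat j i * pad0 v i))\<^sup>2 = (\<Sum>j\<in>UNIV. (\<Sum>i\<in>UNIV. Rmat j i * pad0 v i)\<^sup>2)"
    by (simp add: norm_vec_power2)
  also have "\<dots> = (\<Sum>i\<in>UNIV. Rmat None i * pad0 v i)\<^sup>2 + (\<Sum>a\<in>UNIV. (\<Sum>i\<in>UNIV. Rmat (Some a) i * pad0 v i)\<^sup>2)"
    by (rule sum_UNIV_option)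
  also have "\<dots> = (- S / s)\<^sup>2 + (\<Sum>a\<in>UNIV. (v $ a + \<beta> * S)\<^sup>2)"
    by (simp only: Rmat_pad0_Some Rmat_pad0_None S_def \<beta>_def s_def m_def)
  also have "(\<Sum>a\<in>UNIV. (v $ a + \<beta> * S)\<^sup>2) = (\<Sum>a\<in>UNIV. (v $ a)\<^sup>2 + (2 * \<beta> * S) * v $ a + (\<beta> * S)\<^sup>2)"
    by (simp add: power2_eq_square algebra_simps)
  also have "\<dots> = (\<Sum>a\<in>UNIV. (v $ a)\<^sup>2) + (2 * \<beta> * S) * S + m * (\<beta> * S)\<^sup>2"
    by (simp add: sum.distrib sum_distrib_left[symmetric] S_def m_def)
  also have "(- S / s)\<^sup>2 + ((\<Sum>a\<in>UNIV. (v $ a)\<^sup>2) + (2 * \<beta> * S) * S + m * (\<beta> * S)\<^sup>2)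
      = (\<Sum>a\<in>UNIV. (v $ a)\<^sup>2) + S\<^sup>2 * (2 * \<beta> + m * \<beta>\<^sup>2 + 1 / s\<^sup>2)"
    by (simp add: power2_eq_square field_simps)
  also have "2 * \<beta> + m * \<beta>\<^sup>2 + 1 / s\<^sup>2 = 0" \<comment> \<open>all terms involving \<open>S = \<Sum>v\<close> cancel\<close>
    unfolding \<beta>_def using m s by (rule Rmat_beta_identity)
  finally have "(norm (\<chi> j. \<Sum>i\<in>UNIV. Rmat j i * pad0 v i))\<^sup>2 = (norm v)\<^sup>2"
    by (simp add: norm_vec_power2)
  then show ?thesis
    by (rule power2_eq_imp_eq) simp_all
qed

definition diag_cmat :: "real^'n \<Rightarrow> complex^'n^'n" where
  "diag_cmat v = (\<chi> i j. if i = j then complex_of_real (v $ j) else 0)"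

lemma hs_dist_diag_cmat: "hs_dist (diag_cmat a) (diag_cmat b) = dist a (b :: real^'n::finite)"
proof -
  have "(mat_adj (diag_cmat a - diag_cmat b) ** (diag_cmat a - diag_cmat b)) $ i $ i
        = complex_of_real ((a $ i - b $ i)\<^sup>2)" for i
    by (simp add: matrix_matrix_mult_def mat_adj_def diag_cmat_def power2_eq_square if_distrib
        cong: if_cong)
  then show ?thesis
    by (simp add: hs_dist_def trace_def dist_norm real_sqrt_unique norm_vec_power2)
qed

lemma unif_transf_diff:
  fixes X :: "(real^'m::finite) set"
  shows "unif_transf X x - unif_transf X y =
    (1 / (rad_pc X * sqrt (real CARD('m) * (real CARD('m) + 1)))) *\<^sub>R (\<chi> j. \<Sum>i\<in>UNIV. Rmat j i * pad0 (x - y) i)"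
proof -
  have "pad0 (x - mean_pt X) i - pad0 (y - mean_pt X) i = pad0 (x - y) i" for i
    by (cases i) (auto simp: pad0_def)
  then have "(\<Sum>i\<in>UNIV. Rmat j i * pad0 (x - mean_pt X) i) - (\<Sum>i\<in>UNIV. Rmat j i * pad0 (y - mean_pt X) i)
      = (\<Sum>i\<in>UNIV. Rmat j i * pad0 (x - y) i)" for j
    by (simp add: sum_subtractf[symmetric] right_diff_distrib[symmetric])
  then show ?thesis
    unfolding unif_transf_def by (simp add: vec_eq_iff diff_divide_distrib[symmetric])
qed

lemma dist_unif_transf:
  fixes X :: "(real^'m::finite) set"
  shows "dist (unif_transf X x) (unif_transf X y) =
    dist x y / \<bar>rad_pc X * sqrt (real CARD('m) * (real CARD('m) + 1))\<bar>"
  by (simp add: dist_norm unif_transf_diff norm_Rmat_pad0)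

lemma scaled_hs_dist_rho_utd:
  fixes X :: "(real^'m::finite) set"
  assumes "rad_pc X > 0"
  shows "(rad_pc X * sqrt (real CARD('m) * (real CARD('m) + 1))) * hs_dist (rho_utd X x) (rho_utd X y) = dist x y"
proof -
  have "rho_utd X z = diag_cmat (unif_transf X z)" for z
    by (simp add: rho_utd_def diag_cmat_def)
  then show ?thesis
    using assms by (simp add: hs_dist_diag_cmat dist_unif_transf)
qed

lemma rad_pc_pos:
  fixes X :: "(real^'m) set"
  assumes "finite X" "card X \<ge> 2"
  shows "rad_pc X > 0"
proof -
  obtain a b where ab: "a \<in> X" "b \<in> X" "a \<noteq> b"
    using assms(2) by (metis card_le_Suc_iff numeral_2_eq_2 insert_iff)
  have "finite {dist u v | u v. u \<in> X \<and> v \<in> X}"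
    using assms(1) unfolding pairwise_values_eq_image by simp
  then have "dist a b \<le> diam_pc X"
    unfolding diam_pc_def using ab by (intro Max_ge) auto
  moreover have "dist a b > 0"
    using ab by simp
  ultimately show ?thesis
    unfolding rad_pc_def by linarith
qed

theorem mainTheorem3:
  fixes X :: "(real^'m::finite) set"
  assumes "finite X" and "card X \<ge> 2"
  shows "\<forall>k. ph_iso TYPE('f::field) (rips X dist)
           (rips (rho_utd X ` X)
              (\<lambda>p q. (rad_pc X * sqrt (real CARD('m) * (real CARD('m) + 1))) * hs_dist p q)) k"
proof -
  have scaled: "(rad_pc X * sqrt (real CARD('m) * (real CARD('m) + 1))) *
      hs_dist (rho_utd X u) (rho_utd X v) = dist u v" for u v
    using rad_pc_pos[OF assms] by (rule scaled_hs_dist_rho_utd)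
  have "inj_on (rho_utd X) X"
    by (rule inj_onI) (metis scaled dist_eq_0_iff)
  then show ?thesis
    using assms(1) scaled by (intro allI ph_iso_rips_isometric_image) auto
qed

end
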